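(* Let $F,G$ be finitely supported sequences on $\mathbb{Z}$ with values in $\mathbb{D}$, with $\operatorname{supp}F\subset(-\infty,N_1]$, $\operatorname{supp}G\subset[-N_2,\infty)$, and let $N>N_1+N_2$. Then for every $M\geqslant -N_2$: $$\mathfrak{a}^{( * )}(z,F+(G^{\leqslant M})_{\to N})=\mathfrak{a}^{( * )}(z,F)\mathfrak{a}^{( * )}(z,G^{\leqslant M})+z^N\mathfrak{b}^{( * )}(z,F)\mathfrak{b}(z,G^{\leqslant M}),$$ $$\mathfrak{b}(z,F+(G^{\leqslant M})_{\to N})=z^N\mathfrak{b}(z,G^{\leqslant M})\mathfrak{a}(z,F)+\mathfrak{b}(z,F)\mathfrak{a}^{( * )}(z,G^{\leqslant M}),$$ and, for $z\in\mathbb{T}$, $$|\mathfrak{r}(z,F+(G^{\leqslant M})_{\to N})-\mathfrak{r}(z,F)|\leqslant\frac{|\mathfrak{r}(z,G^{\leqslant M})|}{1-|\mathfrak{r}(z,G^{\leqslant M})|}.$$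
   Context: $\mathbb{T}$, $\mathbb{D}$ denote the unit circle and open unit disc. For a sequence $H$ on $\mathbb{Z}$ and $M,N\in\mathbb{Z}$: $(H_{\to N})_n=H_{n-N}$ and $H^{\leqslant M}=H\chi_{n\leqslant M}$. For a finitely supported sequence $G$ with values in $\mathbb{D}$: let $\widetilde X_n(z)=I$ for $n$ below the support and $\widetilde X_n=(1-|G_n|^2)^{-1/2}\begin{pmatrix}1&\overline{G_n}z^{-n}\\ G_nz^n&1\end{pmatrix}\widetilde X_{n-1}$; for $n$ above the support $\widetilde X_n=\begin{pmatrix}\mathfrak{a}(z,G)&\mathfrak{b}^{( * )}(z,G)\\ \mathfrak{b}(z,G)&\mathfrak{a}^{( * )}(z,G)\end{pmatrix}$, where $f^{( * )}(z)=\overline{f(\bar z^{-1})}$. Also $\mathfrak{r}(z,G)=\mathfrak{b}(z,G)/\mathfrak{a}^{( * )}(z,G)$. *)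

theory Defs
  imports "HOL-Analysis.Analysis"
begin

definition supp_seq :: "(int \<Rightarrow> complex) \<Rightarrow> int set" where
  "supp_seq H = {n. H n \<noteq> 0}"

definition shift_seq :: "(int \<Rightarrow> complex) \<Rightarrow> int \<Rightarrow> (int \<Rightarrow> complex)" where
  "shift_seq H N = (\<lambda>n. H (n - N))"

definition trunc_seq :: "(int \<Rightarrow> complex) \<Rightarrow> int \<Rightarrow> (int \<Rightarrow> complex)" where
  "trunc_seq H M = (\<lambda>n. if n \<le> M then H n else 0)"

definition step_mat :: "(int \<Rightarrow> complex) \<Rightarrow> complex \<Rightarrow> int \<Rightarrow> complex^2^2" where
  "step_mat G z n =
     (1 / sqrt (1 - (cmod (G n))\<^sup>2)) *\<^sub>R
       vector [vector [1, cnj (G n) * z powi (-n)], vector [G n * z powi n, 1]]"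

text \<open>Product step(hi) ** ... ** step(lo) (i.e. X_hi when X_(lo-1) = I).\<close>
definition transfer_on :: "(int \<Rightarrow> complex) \<Rightarrow> complex \<Rightarrow> int \<Rightarrow> int \<Rightarrow> complex^2^2" where
  "transfer_on G z lo hi = foldl (\<lambda>A k. step_mat G z k ** A) (mat 1) [lo..hi]"

text \<open>The matrix X_n for n above the (finite) support.\<close>
definition transfer :: "(int \<Rightarrow> complex) \<Rightarrow> complex \<Rightarrow> complex^2^2" where
  "transfer G z = (if supp_seq G = {} then mat 1
                   else transfer_on G z (Min (supp_seq G)) (Max (supp_seq G)))"

definition frak_a :: "complex \<Rightarrow> (int \<Rightarrow> complex) \<Rightarrow> complex" where
  "frak_a z G = transfer G z $ 1 $ 1"

definition frak_b :: "complex \<Rightarrow> (int \<Rightarrow> complex) \<Rightarrow> complex" where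
  "frak_b z G = transfer G z $ 2 $ 1"

definition frak_a_star :: "complex \<Rightarrow> (int \<Rightarrow> complex) \<Rightarrow> complex" where
  "frak_a_star z G = cnj (frak_a (1 / cnj z) G)"

definition frak_b_star :: "complex \<Rightarrow> (int \<Rightarrow> complex) \<Rightarrow> complex" where
  "frak_b_star z G = cnj (frak_b (1 / cnj z) G)"

definition frak_r :: "complex \<Rightarrow> (int \<Rightarrow> complex) \<Rightarrow> complex" where
  "frak_r z G = frak_b z G / frak_a_star z G"

end

theory Submission
  imports Defs
begin

text \<open>The transfer matrix is the ordered product of the one-step matrices, and a step at
  which the sequence vanishes is the identity. Since the supports of \<open>F\<close> and of the shifted
  truncation of \<open>G\<close> are separated, the matrix of their sum is the matrix of the shifted piece
  times that of \<open>F\<close>; a shift by \<open>N\<close> conjugates every step by \<open>diag(1, z^N)\<close>. Reading off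
  entries, with the symmetry \<open>X\<^sub>2\<^sub>2(z) = conj X\<^sub>1\<^sub>1(1/conj z)\<close>, \<open>X\<^sub>1\<^sub>2(z) = conj X\<^sub>2\<^sub>1(1/conj z)\<close>,
  gives the two identities. On the unit circle \<open>det X = 1\<close> reads \<open>|a|\<^sup>2 = 1 + |b|\<^sup>2\<close>, the
  difference of the reflection coefficients is \<open>z^N b(G)\<close> divided by \<open>conj a(F)\<close> times \<open>a\<^sup>*\<close> of the sum, and
  \<open>|a(F)| (|a(F)| |a(G)| - |b(F)| |b(G)|) \<ge> |a(G)| - |b(G)|\<close> bounds it.\<close>

lemma mat2_eq_iff:
  "(A::'a^2^2) = B \<longleftrightarrow> A$1$1 = B$1$1 \<and> A$1$2 = B$1$2 \<and> A$2$1 = B$2$1 \<and> A$2$2 = B$2$2"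
  by (simp add: vec_eq_iff forall_2)

lemma matrix_mult_2_component:
  "((A::'a::semiring_1^2^2) ** B)$i$j = A$i$1 * B$1$j + A$i$2 * B$2$j"
  by (simp add: matrix_matrix_mult_def sum_2)

lemma mat_1_2_components:
  "(mat 1::'a::zero_neq_one^2^2)$1$1 = 1" "(mat 1::'a^2^2)$1$2 = 0"
  "(mat 1::'a^2^2)$2$1 = 0" "(mat 1::'a^2^2)$2$2 = 1"
  by (simp_all add: mat_def)

definition step_scale :: "(int \<Rightarrow> complex) \<Rightarrow> int \<Rightarrow> complex" where
  "step_scale G n = of_real (1 / sqrt (1 - (cmod (G n))\<^sup>2))"

lemma step_mat_components:
  "step_mat G z n $1$1 = step_scale G n"
  "step_mat G z n $1$2 = step_scale G n * (cnj (G n) * z powi (-n))"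
  "step_mat G z n $2$1 = step_scale G n * (G n * z powi n)"
  "step_mat G z n $2$2 = step_scale G n"
  unfolding step_mat_def step_scale_def
  by (simp_all only: vector_scaleR_component) (simp_all add: scaleR_conv_of_real)

lemma step_mat_zero: "G n = 0 \<Longrightarrow> step_mat G z n = mat 1"
  by (simp add: mat2_eq_iff step_mat_components step_scale_def mat_1_2_components)

lemma step_mat_det:
  assumes "cmod (G n) < 1" and "z \<noteq> 0"
  shows "step_mat G z n $1$1 * step_mat G z n $2$2 - step_mat G z n $1$2 * step_mat G z n $2$1 = 1"
proof -
  have lt: "(cmod (G n))\<^sup>2 < 1"
    using assms(1) by (simp add: abs_square_less_1)
  have "step_scale G n * step_scale G n = of_real (1 / (1 - (cmod (G n))\<^sup>2))"
    using lt by (simp add: step_scale_def real_sqrt_mult_self flip: of_real_mult)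
  moreover have "cnj (G n) * G n = of_real ((cmod (G n))\<^sup>2)"
    by (metis complex_norm_square mult.commute of_real_power)
  moreover have "z powi (-n) * z powi n = 1"
    using assms(2) by (simp add: power_int_minus)
  moreover have "of_real (1 / (1 - (cmod (G n))\<^sup>2)) * (1 - of_real ((cmod (G n))\<^sup>2)) = (1::complex)"
  proof -
    have "(1 / (1 - (cmod (G n))\<^sup>2)) * (1 - (cmod (G n))\<^sup>2) = (1::real)"
      using lt by simp
    then show ?thesis
      by (metis of_real_1 of_real_diff of_real_mult)
  qed
  ultimately have "step_scale G n * step_scale G n * (1 - cnj (G n) * G n * (z powi (-n) * z powi n)) = 1"
    by simp
  then show ?thesis
    by (simp add: step_mat_components algebra_simps)
qed

definition transfer_list :: "(int \<Rightarrow> complex) \<Rightarrow> complex \<Rightarrow> int list \<Rightarrow> complex^2^2" where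
  "transfer_list G z ks = foldl (\<lambda>A k. step_mat G z k ** A) (mat 1) ks"

lemma transfer_list_Nil [simp]: "transfer_list G z [] = mat 1"
  by (simp add: transfer_list_def)

lemma transfer_list_snoc [simp]: "transfer_list G z (ks @ [k]) = step_mat G z k ** transfer_list G z ks"
  by (simp add: transfer_list_def)

lemma transfer_list_append:
  "transfer_list G z (ks @ ls) = transfer_list G z ls ** transfer_list G z ks"
  by (induction ls rule: rev_induct) (simp_all add: matrix_mul_assoc flip: append_assoc)

lemma transfer_list_cong:
  "(\<And>k. k \<in> set ks \<Longrightarrow> G k = G' k) \<Longrightarrow> transfer_list G z ks = transfer_list G' z ks"
  unfolding transfer_list_def step_mat_def by (intro foldl_cong) auto

lemma transfer_list_eq_mat_1:
  "(\<And>k. k \<in> set ks \<Longrightarrow> G k = 0) \<Longrightarrow> transfer_list G z ks = mat 1"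
  by (induction ks rule: rev_induct) (simp_all add: step_mat_zero)

lemma transfer_on_eq_transfer_list: "transfer_on G z lo hi = transfer_list G z [lo..hi]"
  by (simp add: transfer_on_def transfer_list_def)

lemma transfer_eq_transfer_list:
  "transfer G z = transfer_list G z
     (if supp_seq G = {} then [] else [Min (supp_seq G)..Max (supp_seq G)])"
  by (simp add: transfer_def transfer_on_eq_transfer_list)

lemma transfer_on_split:
  assumes "lo - 1 \<le> m" "m \<le> hi"
  shows "transfer_on G z lo hi = transfer_on G z (m + 1) hi ** transfer_on G z lo m"
proof -
  have "[lo..hi] = [lo..m] @ [m + 1..hi]"
  proof (cases "m = hi")
    case False
    then show ?thesis
      using upto_split1[of lo "m + 1" hi] assms by simp
  qed simp
  then show ?thesis
    by (simp add: transfer_on_eq_transfer_list transfer_list_append)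
qed

lemma transfer_on_eq_mat_1:
  "(\<And>k. lo \<le> k \<Longrightarrow> k \<le> hi \<Longrightarrow> G k = 0) \<Longrightarrow> transfer_on G z lo hi = mat 1"
  unfolding transfer_on_eq_transfer_list by (intro transfer_list_eq_mat_1) auto

lemma transfer_on_cong:
  "(\<And>k. lo \<le> k \<Longrightarrow> k \<le> hi \<Longrightarrow> G k = G' k) \<Longrightarrow> transfer_on G z lo hi = transfer_on G' z lo hi"
  unfolding transfer_on_eq_transfer_list by (intro transfer_list_cong) auto

lemma transfer_eq_transfer_on:
  assumes fin: "finite (supp_seq G)" and supp: "supp_seq G \<subseteq> {lo..hi}"
  shows "transfer G z = transfer_on G z lo hi"
proof (cases "supp_seq G = {}")
  case True
  then show ?thesis
    by (simp add: transfer_def supp_seq_def transfer_on_eq_mat_1)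
next
  case False
  define mn where "mn = Min (supp_seq G)"
  define mx where "mx = Max (supp_seq G)"
  have mn: "\<And>k. k \<in> supp_seq G \<Longrightarrow> mn \<le> k" and mx: "\<And>k. k \<in> supp_seq G \<Longrightarrow> k \<le> mx"
    using fin by (simp_all add: mn_def mx_def)
  have bounds: "lo \<le> mn" "mn \<le> mx" "mx \<le> hi"
    using fin False supp by (auto simp: mn_def mx_def)
  have "transfer_on G z lo hi = transfer_on G z (mx + 1) hi ** transfer_on G z lo mx"
    using bounds by (intro transfer_on_split) auto
  also have "transfer_on G z (mx + 1) hi = mat 1"
    using mx by (intro transfer_on_eq_mat_1) (force simp: supp_seq_def)
  also have "transfer_on G z lo mx = transfer_on G z mn mx ** transfer_on G z lo (mn - 1)"
    using bounds transfer_on_split[of lo "mn - 1" mx] by simp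
  also have "transfer_on G z lo (mn - 1) = mat 1"
    using mn by (intro transfer_on_eq_mat_1) (force simp: supp_seq_def)
  finally show ?thesis
    using False by (simp add: transfer_def mn_def mx_def)
qed

definition diag_powi :: "complex \<Rightarrow> int \<Rightarrow> complex^2^2" where
  "diag_powi z N = vector [vector [1, 0], vector [0, z powi N]]"

lemma diag_powi_components:
  "diag_powi z N $1$1 = 1" "diag_powi z N $1$2 = 0"
  "diag_powi z N $2$1 = 0" "diag_powi z N $2$2 = z powi N"
  by (simp_all add: diag_powi_def)

lemma diag_powi_0: "diag_powi z 0 = mat 1"
  by (simp add: mat2_eq_iff diag_powi_components mat_1_2_components)

lemma diag_powi_mult: "z \<noteq> 0 \<Longrightarrow> diag_powi z M ** diag_powi z N = diag_powi z (M + N)"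
  by (simp add: mat2_eq_iff matrix_mult_2_component diag_powi_components power_int_add)

lemma step_mat_shift:
  assumes "z \<noteq> 0"
  shows "step_mat (shift_seq H N) z (k + N) = diag_powi z N ** step_mat H z k ** diag_powi z (-N)"
proof -
  have minus: "z powi (- N - k) = inverse (z powi N) * inverse (z powi k)"
    using assms power_int_add[of z "-N" "-k"] by (simp add: power_int_minus)
  have plus: "z powi (N + k) = z powi N * z powi k"
    using assms power_int_add[of z N k] by simp
  show ?thesis
    using assms
    by (simp add: mat2_eq_iff matrix_mult_2_component step_mat_components diag_powi_components
        shift_seq_def step_scale_def minus plus power_int_minus field_simps)
qed

lemma transfer_list_shift:
  assumes "z \<noteq> 0"
  shows "transfer_list (shift_seq H N) z (map (\<lambda>k. k + N) ks) =
    diag_powi z N ** transfer_list H z ks ** diag_powi z (-N)"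
proof (induction ks rule: rev_induct)
  case Nil
  show ?case
    using assms by (simp add: diag_powi_mult diag_powi_0)
next
  case (snoc k ks)
  have "transfer_list (shift_seq H N) z (map (\<lambda>k. k + N) (ks @ [k])) =
      diag_powi z N ** step_mat H z k ** (diag_powi z (-N) ** diag_powi z N) **
      transfer_list H z ks ** diag_powi z (-N)"
    by (simp add: snoc step_mat_shift[OF assms] matrix_mul_assoc)
  then show ?case
    using assms by (simp add: diag_powi_mult diag_powi_0 matrix_mul_assoc)
qed

lemma upto_add_shift: "[lo + N..hi + N] = map (\<lambda>k. k + N) [lo..hi]"
  by (rule nth_equalityI) auto

lemma step_mat_conj_symmetric:
  assumes "z \<noteq> 0"
  shows "step_mat H z k $2$2 = cnj (step_mat H (1 / cnj z) k $1$1)"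
    and "step_mat H z k $2$1 = cnj (step_mat H (1 / cnj z) k $1$2)"
    and "step_mat H z k $1$2 = cnj (step_mat H (1 / cnj z) k $2$1)"
    and "step_mat H z k $1$1 = cnj (step_mat H (1 / cnj z) k $2$2)"
proof -
  have powi_inverse: "(1 / w) powi n = inverse (w powi n)" for w :: complex and n
    by (simp add: power_int_inverse flip: inverse_eq_divide)
  show "step_mat H z k $2$2 = cnj (step_mat H (1 / cnj z) k $1$1)"
    and "step_mat H z k $2$1 = cnj (step_mat H (1 / cnj z) k $1$2)"
    and "step_mat H z k $1$2 = cnj (step_mat H (1 / cnj z) k $2$1)"
    and "step_mat H z k $1$1 = cnj (step_mat H (1 / cnj z) k $2$2)"
    using assms
    by (simp_all add: step_mat_components step_scale_def complex_cnj_power_int power_int_minus powi_inverse)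
qed

lemma transfer_list_conj_symmetric:
  assumes "z \<noteq> 0"
  shows "transfer_list H z ks $2$2 = cnj (transfer_list H (1 / cnj z) ks $1$1) \<and>
    transfer_list H z ks $2$1 = cnj (transfer_list H (1 / cnj z) ks $1$2) \<and>
    transfer_list H z ks $1$2 = cnj (transfer_list H (1 / cnj z) ks $2$1) \<and>
    transfer_list H z ks $1$1 = cnj (transfer_list H (1 / cnj z) ks $2$2)"
  by (induction ks rule: rev_induct)
    (simp_all add: mat_1_2_components matrix_mult_2_component step_mat_conj_symmetric[OF assms])

lemma transfer_list_det:
  assumes "\<forall>n. cmod (H n) < 1" and "z \<noteq> 0"
  shows "transfer_list H z ks $1$1 * transfer_list H z ks $2$2
    - transfer_list H z ks $1$2 * transfer_list H z ks $2$1 = 1"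
proof (induction ks rule: rev_induct)
  case (snoc k ks)
  have det_mult: "(a*e + b*g) * (c*f + d*h) - (a*f + b*h) * (c*e + d*g) = (a*d - b*c) * (e*h - f*g)"
    for a b c d e f g h :: complex
    by (simp add: algebra_simps)
  show ?case
    using snoc step_mat_det[of H k z] assms by (simp add: matrix_mult_2_component det_mult)
qed (simp add: mat_1_2_components)

lemma frak_a_star_eq: "z \<noteq> 0 \<Longrightarrow> frak_a_star z G = transfer G z $2$2"
  unfolding frak_a_star_def frak_a_def transfer_eq_transfer_list
  using transfer_list_conj_symmetric by metis

lemma frak_b_star_eq: "z \<noteq> 0 \<Longrightarrow> frak_b_star z G = transfer G z $1$2"
  unfolding frak_b_star_def frak_b_def transfer_eq_transfer_list
  using transfer_list_conj_symmetric by metis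

lemma frak_det:
  assumes "\<forall>n. cmod (G n) < 1" and "z \<noteq> 0"
  shows "frak_a z G * frak_a_star z G - frak_b_star z G * frak_b z G = 1"
  using transfer_list_det[OF assms, of "if supp_seq G = {} then [] else [Min (supp_seq G)..Max (supp_seq G)]"]
  unfolding frak_a_star_eq[OF assms(2)] frak_b_star_eq[OF assms(2)] frak_a_def frak_b_def
    transfer_eq_transfer_list
  by (simp only: mult.commute)

lemma transfer_add_shift:
  assumes finF: "finite (supp_seq F)" and finG: "finite (supp_seq G)"
    and suppF: "supp_seq F \<subseteq> {..K}" and suppG: "supp_seq G \<subseteq> {K - N<..}"
    and "z \<noteq> 0"
  shows "transfer (\<lambda>n. F n + shift_seq G N n) z =
    diag_powi z N ** transfer G z ** diag_powi z (-N) ** transfer F z"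
proof -
  define H where "H = (\<lambda>n. F n + shift_seq G N n)"
  define lo where "lo = Min (insert K (supp_seq F))"
  define hi where "hi = Max (insert (K - N + 1) (supp_seq G))"
  have suppF': "supp_seq F \<subseteq> {lo..K}"
    using finF suppF by (auto simp: lo_def)
  have suppG': "supp_seq G \<subseteq> {K - N + 1..hi}"
    using finG suppG by (force simp: hi_def)
  have bounds: "lo \<le> K" "K - N + 1 \<le> hi"
    using finF finG by (auto simp: lo_def hi_def)
  have F_zero: "F k = 0" if "K < k" for k
    using suppF that by (force simp: supp_seq_def)
  have G_zero: "shift_seq G N k = 0" if "k \<le> K" for k
    using suppG that by (force simp: supp_seq_def shift_seq_def)
  have "supp_seq H \<subseteq> {lo..hi + N}"
  proof
    fix k
    assume "k \<in> supp_seq H"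
    then have "k \<in> supp_seq F \<or> k - N \<in> supp_seq G"
      by (auto simp: H_def supp_seq_def shift_seq_def)
    then show "k \<in> {lo..hi + N}"
      using suppF' suppG' bounds by auto
  qed
  then have "transfer H z = transfer_on H z lo (hi + N)"
    by (intro transfer_eq_transfer_on) (auto intro: finite_subset)
  also have "\<dots> = transfer_on H z (K + 1) (hi + N) ** transfer_on H z lo K"
    using bounds by (intro transfer_on_split) auto
  also have "transfer_on H z lo K = transfer F z"
    unfolding transfer_eq_transfer_on[OF finF suppF'] by (rule transfer_on_cong) (simp add: H_def G_zero)
  also have "transfer_on H z (K + 1) (hi + N) = transfer_on (shift_seq G N) z (K + 1) (hi + N)"
    by (rule transfer_on_cong) (simp add: H_def F_zero)
  also have "\<dots> = diag_powi z N ** transfer G z ** diag_powi z (-N)"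
  proof -
    have "[K + 1..hi + N] = map (\<lambda>k. k + N) [K - N + 1..hi]"
      using upto_add_shift[of "K - N + 1" N hi] by simp
    then show ?thesis
      by (simp add: transfer_on_eq_transfer_list transfer_list_shift[OF assms(5)]
          transfer_eq_transfer_on[OF finG suppG'])
  qed
  finally show ?thesis
    by (simp add: H_def)
qed

lemma frak_add_shift:
  assumes "finite (supp_seq F)" and "finite (supp_seq G)"
    and "supp_seq F \<subseteq> {..K}" and "supp_seq G \<subseteq> {K - N<..}"
    and z: "z \<noteq> 0"
  shows "frak_a_star z (\<lambda>n. F n + shift_seq G N n) =
      frak_a_star z F * frak_a_star z G + z powi N * frak_b_star z F * frak_b z G"
    and "frak_b z (\<lambda>n. F n + shift_seq G N n) =
      z powi N * frak_b z G * frak_a z F + frak_b z F * frak_a_star z G"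
proof -
  note transfer_sum = transfer_add_shift[OF assms]
  have powi_N: "z powi N * z powi (-N) = 1"
    using z by (simp add: power_int_minus)
  show "frak_a_star z (\<lambda>n. F n + shift_seq G N n) =
      frak_a_star z F * frak_a_star z G + z powi N * frak_b_star z F * frak_b z G"
    unfolding frak_a_star_eq[OF z] frak_b_star_eq[OF z] frak_b_def transfer_sum
    by (simp add: matrix_mult_2_component diag_powi_components algebra_simps powi_N)
  show "frak_b z (\<lambda>n. F n + shift_seq G N n) =
      z powi N * frak_b z G * frak_a z F + frak_b z F * frak_a_star z G"
    unfolding frak_a_star_eq[OF z] frak_a_def frak_b_def transfer_sum
    by (simp add: matrix_mult_2_component diag_powi_components algebra_simps powi_N)
qed

lemma inverse_cnj_unit_circle:
  assumes "cmod z = 1"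
  shows "1 / cnj z = z"
proof -
  have "z * cnj z = 1"
    using complex_norm_square[of z] assms by simp
  then show ?thesis
    by (metis complex_cnj_zero_iff divide_eq_eq mult_zero_left zero_neq_one)
qed

lemma frak_a_star_unit_circle: "cmod z = 1 \<Longrightarrow> frak_a_star z G = cnj (frak_a z G)"
  and frak_b_star_unit_circle: "cmod z = 1 \<Longrightarrow> frak_b_star z G = cnj (frak_b z G)"
  by (simp_all add: frak_a_star_def frak_b_star_def inverse_cnj_unit_circle)

lemma mult_cnj_diff_eq_1_iff:
  "u * cnj u - v * cnj v = 1 \<longleftrightarrow> (cmod u)\<^sup>2 = 1 + (cmod v)\<^sup>2"
proof -
  have "u * cnj u - v * cnj v = of_real ((cmod u)\<^sup>2 - (cmod v)\<^sup>2)"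
    by (simp only: of_real_diff complex_norm_square)
  then show ?thesis
    by (metis diff_eq_eq add.commute of_real_eq_1_iff)
qed

lemma frak_norm_unit_circle:
  assumes "\<forall>n. cmod (G n) < 1" and "cmod z = 1"
  shows "(cmod (frak_a z G))\<^sup>2 = 1 + (cmod (frak_b z G))\<^sup>2"
proof -
  have "z \<noteq> 0"
    using assms(2) by auto
  from frak_det[OF assms(1) this]
  have "frak_a z G * cnj (frak_a z G) - frak_b z G * cnj (frak_b z G) = 1"
    by (simp only: frak_a_star_unit_circle[OF assms(2)] frak_b_star_unit_circle[OF assms(2)] mult.commute)
  then show ?thesis
    by (simp only: mult_cnj_diff_eq_1_iff)
qed

lemma pythagorean_pair_bound:
  fixes x y p q :: real
  assumes xy: "x\<^sup>2 = 1 + y\<^sup>2" and pq: "p\<^sup>2 = 1 + q\<^sup>2"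
    and nonneg: "0 \<le> x" "0 \<le> y" "0 \<le> p" "0 \<le> q"
  shows "q < p" and "p - q \<le> x * (x * p - y * q)"
proof -
  have "y < x"
    using xy nonneg power_less_imp_less_base[of y 2 x] by simp
  show "q < p"
    using pq nonneg power_less_imp_less_base[of q 2 p] by simp
  have "x * (x * p - y * q) - (p - q) = (x\<^sup>2 - 1 - y\<^sup>2) * (p - q) + y\<^sup>2 * (p - q) + q * x * (x - y)"
    by (simp add: algebra_simps power2_eq_square)
  also have "\<dots> \<ge> 0"
    using xy \<open>y < x\<close> \<open>q < p\<close> nonneg by simp
  finally show "p - q \<le> x * (x * p - y * q)" by simp
qed

lemma composed_reflection_bound:
  fixes a b a' b' w :: complex
  assumes det: "(cmod a)\<^sup>2 = 1 + (cmod b)\<^sup>2" and det': "(cmod a')\<^sup>2 = 1 + (cmod b')\<^sup>2"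
    and w: "cmod w = 1"
  shows "cmod ((w * b' * a + b * cnj a') / (cnj a * cnj a' + w * cnj b * b') - b / cnj a)
    \<le> cmod (b' / cnj a') / (1 - cmod (b' / cnj a'))"
proof -
  define A where "A = cnj a * cnj a' + w * cnj b * b'"
  have "cmod a' - cmod b' \<le> cmod a * (cmod a * cmod a' - cmod b * cmod b')"
    by (rule pythagorean_pair_bound(2)[OF det det']) auto
  also have "\<dots> \<le> cmod a * cmod A"
    using norm_diff_ineq[of "cnj a * cnj a'" "w * cnj b * b'"] w
    by (intro mult_left_mono) (simp_all add: A_def norm_mult)
  finally have bound: "cmod a' - cmod b' \<le> cmod A * cmod a"
    by (simp only: mult.commute)
  have gap: "0 < cmod a' - cmod b'"
    using pythagorean_pair_bound(1)[OF det det'] by simp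
  then have "A \<noteq> 0" "cnj a \<noteq> 0" "a' \<noteq> 0"
    using bound by auto
  have "(w * b' * a + b * cnj a') * cnj a - b * A = w * b' * (a * cnj a - b * cnj b)"
    by (simp add: A_def algebra_simps)
  also have "\<dots> = w * b'"
    using det mult_cnj_diff_eq_1_iff[of a b] by simp
  finally have "(w * b' * a + b * cnj a') / A - b / cnj a = w * b' / (A * cnj a)"
    using diff_frac_eq[OF \<open>A \<noteq> 0\<close> \<open>cnj a \<noteq> 0\<close>] by simp
  then have "cmod ((w * b' * a + b * cnj a') / A - b / cnj a) = cmod b' / (cmod A * cmod a)"
    using w by (simp add: norm_divide norm_mult)
  also have "\<dots> \<le> cmod b' / (cmod a' - cmod b')"
    using bound gap by (intro divide_left_mono) auto
  also have "\<dots> = cmod (b' / cnj a') / (1 - cmod (b' / cnj a'))"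
    using gap \<open>a' \<noteq> 0\<close> by (simp add: norm_divide field_simps)
  finally show ?thesis
    by (simp only: A_def)
qed

theorem lemma2p1:
  fixes F G :: "int \<Rightarrow> complex" and N1 N2 N M :: int and z :: complex
  assumes finF: "finite (supp_seq F)" and finG: "finite (supp_seq G)"
    and discF: "\<forall>n. cmod (F n) < 1" and discG: "\<forall>n. cmod (G n) < 1"
    and suppF: "supp_seq F \<subseteq> {..N1}" and suppG: "supp_seq G \<subseteq> {-N2..}"
    and hN: "N > N1 + N2" and hM: "M \<ge> -N2"
    and hz: "z \<noteq> 0"
  shows "(frak_a_star z (\<lambda>n. F n + shift_seq (trunc_seq G M) N n) =
           frak_a_star z F * frak_a_star z (trunc_seq G M)
           + z powi N * frak_b_star z F * frak_b z (trunc_seq G M))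
    \<and> (frak_b z (\<lambda>n. F n + shift_seq (trunc_seq G M) N n) =
           z powi N * frak_b z (trunc_seq G M) * frak_a z F
           + frak_b z F * frak_a_star z (trunc_seq G M))
    \<and> (cmod z = 1 \<longrightarrow>
         cmod (frak_r z (\<lambda>n. F n + shift_seq (trunc_seq G M) N n) - frak_r z F)
           \<le> cmod (frak_r z (trunc_seq G M)) / (1 - cmod (frak_r z (trunc_seq G M))))"
proof -
  let ?G' = "trunc_seq G M"
  have "supp_seq ?G' \<subseteq> supp_seq G"
    by (auto simp: trunc_seq_def supp_seq_def)
  then have finG': "finite (supp_seq ?G')" and suppG': "supp_seq ?G' \<subseteq> {N1 - N<..}"
    using finG suppG hN by (auto intro: finite_subset)
  have discG': "\<forall>n. cmod (?G' n) < 1"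
    using discG by (simp add: trunc_seq_def)
  note a_star = frak_add_shift(1)[OF finF finG' suppF suppG' hz]
    and b = frak_add_shift(2)[OF finF finG' suppF suppG' hz]
  have "cmod (frak_r z (\<lambda>n. F n + shift_seq ?G' N n) - frak_r z F)
      \<le> cmod (frak_r z ?G') / (1 - cmod (frak_r z ?G'))" if "cmod z = 1"
    using composed_reflection_bound[OF frak_norm_unit_circle[OF discF that]
        frak_norm_unit_circle[OF discG' that], of "z powi N"] that a_star b
    by (simp add: frak_r_def frak_a_star_unit_circle frak_b_star_unit_circle norm_power_int)
  with a_star b show ?thesis
    by blast
qed

end
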